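(* Let $L\ge 2$ be an integer and $\sigma_r>0$. Let $\Theta_1,\dots,\Theta_L$ be i.i.d. uniform on $[0,2\pi)$, and let $\angle_{(L-1)}$ be the second largest of the internodal angles $\angle_k=\Theta_{(k+1)}-\Theta_{(k)}$ ($1\le k<L$), $\angle_L=2\pi-(\Theta_{(L)}-\Theta_{(1)})$, where $\Theta_{(1)}\le\dots\le\Theta_{(L)}$ are the order statistics of the $\Theta_k$. Define $a=\sigma_r\sqrt{4/L}$ and the random variable $$S=\frac{a}{\sin(\angle_{(L-1)})}$$ (taking values in $[a,\infty]$). Then $S\ge a$ almost surely, and for every $s\ge a$, $$\mathrm{P}[S\le s]=\sum_{n=0}^{\mathcal{X}_2}(-1)^{n-1}\binom{L}{n}(n-1)\Big(1-\frac{n\varphi_2}{2\pi}\Big)^{L-1}-\sum_{n=0}^{\mathcal{X}_1}(-1)^{n-1}\binom{L}{n}(n-1)\Big(1-\frac{n\varphi_1}{2\pi}\Big)^{L-1},$$ where $\varphi_1=\sin^{-1}(a/s)$, $\varphi_2=\pi-\sin^{-1}(a/s)$, $\mathcal{X}_1=\min\{L,\lfloor 2\pi/\varphi_1\rfloor\}$ and $\mathcal{X}_2=\min\{L,\lfloor 2\pi/\varphi_2\rfloor\}$.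
   Context: Here $\sin^{-1}$ denotes the principal arcsine with values in $[0,\pi/2]$ for arguments in $[0,1]$. The random variable $S$ is the paper's approximation of the square root of the Cramér–Rao lower bound for TOA localization with $L$ anchors at uniformly random angles around the target and common range-error standard deviation $\sigma_r$. *)

theory Defs
  imports "HOL-Probability.Probability"
begin

definition sorted_angles :: "nat \<Rightarrow> (nat \<Rightarrow> real) \<Rightarrow> real list" where
  "sorted_angles L th = sort (map th [0..<L])"

definition internodal_angles :: "nat \<Rightarrow> (nat \<Rightarrow> real) \<Rightarrow> real list" where
  "internodal_angles L th =
     (let xs = sorted_angles L th in
        map (\<lambda>k. xs ! (k + 1) - xs ! k) [0..<L - 1] @ [2 * pi - (last xs - hd xs)])"

text \<open>The (L-1)-th order statistic (i.e. the second largest) of the internodal angles.\<close>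
definition second_largest_angle :: "nat \<Rightarrow> (nat \<Rightarrow> real) \<Rightarrow> real" where
  "second_largest_angle L th = sort (internodal_angles L th) ! (L - 2)"

definition S_val :: "real \<Rightarrow> nat \<Rightarrow> (nat \<Rightarrow> real) \<Rightarrow> ereal" where
  "S_val a L th = (let t = sin (second_largest_angle L th) in
                     if t > 0 then ereal (a / t) else \<infinity>)"

definition cdf_sum :: "nat \<Rightarrow> real \<Rightarrow> real" where
  "cdf_sum L \<phi> = (\<Sum>n = 0..min L (nat \<lfloor>2 * pi / \<phi>\<rfloor>).
      (-1::real) powi (int n - 1) * real (L choose n) * (real n - 1)
        * (1 - real n * \<phi> / (2 * pi)) ^ (L - 1))"

end

theory Submission
  imports Defs
begin

text \<open>
  The second largest internodal angle is at most \<open>x\<close> iff at most one angle is followed by a gap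
  longer than \<open>x\<close>. Let \<open>E I\<close> be the event that every angle indexed by \<open>I\<close> is followed by such
  a gap. The coefficients \<open>c n = (-1)^(n-1) (n-1)\<close> of \<open>cdf_sum\<close> sum to \<open>1\<close> over the subsets of a
  set with at most one element and to \<open>0\<close> otherwise, so inclusion-exclusion gives
  \<open>P[second largest \<le> x] = \<Sum>I. c |I| P(E I)\<close>.

  To compute \<open>P(E I) = max 0 (1 - |I| x / (2 pi)) ^ (L - 1)\<close>, condition on the largest angle \<open>t\<close> of
  \<open>I\<close>: the other angles of \<open>I\<close> must then lie in the window \<open>(t + x - 2 pi, t - x)\<close>, where
  circular and linear separation agree, and be pairwise more than \<open>x\<close> apart, a configuration
  space whose volume is computed by the same conditioning. Each of the remaining angles must
  avoid the \<open>|I|\<close> disjoint arcs of length \<open>x\<close> following the angles of \<open>I\<close>, which contributes a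
  factor \<open>1 - |I| x / (2 pi)\<close> by independence.

  Finally, \<open>S \<le> s\<close> iff \<open>arcsin (a/s) \<le> second largest \<le> pi - arcsin (a/s)\<close>, since the second
  largest gap never exceeds \<open>pi\<close>; it has no atoms, which accounts for the difference of two values
  of \<open>cdf_sum\<close>.
\<close>

section \<open>Sorting and product measures\<close>

lemma card_sort_nth: "card {k. k < length xs \<and> P (sort xs ! k)} = card {k. k < length xs \<and> P (xs ! k)}"
  using length_filter_conv_card[of P "sort xs"] length_filter_conv_card[of P xs]
  by (simp add: filter_sort)

lemma sort_nth_le_iff:
  fixes xs :: "'a::linorder list"
  assumes j: "j < length xs"
  shows "sort xs ! j \<le> t \<longleftrightarrow> j < length (filter (\<lambda>z. z \<le> t) xs)"
proof -
  define B where "B = {k. k < length xs \<and> sort xs ! k \<le> t}"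
  have card_B: "length (filter (\<lambda>z. z \<le> t) xs) = card B"
    using card_sort_nth[of xs "\<lambda>z. z \<le> t"] by (simp add: B_def length_filter_conv_card)
  have mono: "sort xs ! k \<le> sort xs ! k'" if "k \<le> k'" "k' < length xs" for k k'
    using that by (intro sorted_nth_mono) auto
  show ?thesis
  proof
    assume le: "sort xs ! j \<le> t"
    have "sort xs ! k \<le> t" if "k \<le> j" for k
      using mono[OF that j] le by (rule order_trans)
    with j have "{..j} \<subseteq> B"
      by (auto simp: B_def)
    from card_mono[OF _ this] show "j < length (filter (\<lambda>z. z \<le> t) xs)"
      by (simp add: card_B B_def)
  next
    assume less: "j < length (filter (\<lambda>z. z \<le> t) xs)"
    show "sort xs ! j \<le> t"
    proof (rule ccontr)
      assume gt: "\<not> sort xs ! j \<le> t"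
      have "k < j" if "k \<in> B" for k
      proof (rule ccontr)
        assume "\<not> k < j"
        with that have "sort xs ! j \<le> sort xs ! k" "sort xs ! k \<le> t"
          using mono by (auto simp: B_def)
        with gt show False
          by (meson order_trans)
      qed
      then have "B \<subseteq> {..<j}"
        by auto
      from card_mono[OF _ this] less show False
        by (simp add: card_B)
    qed
  qed
qed

lemma sort_nth_measurable:
  fixes f :: "nat \<Rightarrow> 'a \<Rightarrow> real"
  assumes f: "\<And>k. k < n \<Longrightarrow> f k \<in> borel_measurable M" and j: "j < n"
  shows "(\<lambda>w. sort (map (\<lambda>k. f k w) [0..<n]) ! j) \<in> borel_measurable M"
proof (rule borel_measurable_iff_le[THEN iffD2], intro allI)
  fix a :: real
  define n_le where "n_le w = (\<Sum>k<n. if f k w \<le> a then 1 else 0 :: real)" for w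
  have len: "real (length (filter (\<lambda>z. z \<le> a) (map (\<lambda>k. f k w) [0..<m])))
      = (\<Sum>k<m. if f k w \<le> a then 1 else 0)" for w m
    by (induction m) auto
  have "{w \<in> space M. sort (map (\<lambda>k. f k w) [0..<n]) ! j \<le> a} = {w \<in> space M. real j < n_le w}"
    unfolding n_le_def len[symmetric] using sort_nth_le_iff[of j "map (\<lambda>k. f k w) [0..<n]" a for w] j
    by simp
  also have "\<dots> \<in> sets M"
  proof -
    have "(\<lambda>w. if f k w \<le> a then 1 else 0 :: real) \<in> borel_measurable M" if "k < n" for k
    proof -
      have [measurable]: "f k \<in> borel_measurable M"
        using f that .
      show ?thesis
        by measurable
    qed
    then have [measurable]: "n_le \<in> borel_measurable M"
      unfolding n_le_def by (intro borel_measurable_sum) auto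
    show ?thesis
      by measurable
  qed
  finally show "{w \<in> space M. sort (map (\<lambda>k. f k w) [0..<n]) ! j \<le> a} \<in> sets M" .
qed

lemma sum_Pow_card:
  assumes "finite S"
  shows "(\<Sum>I\<in>Pow S. f (card I)) = (\<Sum>n\<le>card S. real (card S choose n) * f n)"
proof -
  have "(\<Sum>I\<in>Pow S. f (card I)) = (\<Sum>n\<le>card S. \<Sum>I\<in>{I \<in> Pow S. card I = n}. f (card I))"
    using assms by (intro sum.group[symmetric]) (auto intro: card_mono)
  also have "\<dots> = (\<Sum>n\<le>card S. real (card S choose n) * f n)"
    using n_subsets[OF assms] by (intro sum.cong refl) (simp add: Pow_def)
  finally show ?thesis .
qed

lemma le_sin_iff_arcsin_bounds:
  fixes q g :: real
  assumes q: "0 \<le> q" "q \<le> 1" and g: "0 \<le> g" "g \<le> pi"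
  shows "q \<le> sin g \<longleftrightarrow> arcsin q \<le> g \<and> g \<le> pi - arcsin q"
proof -
  have arcsin_q: "arcsin q \<le> pi / 2"
    using arcsin_bounded[of q] q by auto
  show ?thesis
  proof (cases "g \<le> pi / 2")
    case True
    with q g arcsin_q show ?thesis
      by (subst arcsin_le_iff[symmetric]) auto
  next
    case False
    have "q \<le> sin (pi - g) \<longleftrightarrow> arcsin q \<le> pi - g"
      using q g False by (intro arcsin_le_iff[symmetric]) auto
    with False arcsin_q show ?thesis
      by auto
  qed
qed

lemma inj_on_obtain_strict_argmax:
  fixes y :: "'i \<Rightarrow> 'a::linorder"
  assumes "finite A" "A \<noteq> {}" "inj_on y A"
  obtains b where "b \<in> A" "\<forall>i\<in>A - {b}. y i < y b"
proof -
  have "Max (y ` A) \<in> y ` A"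
    using assms(1,2) by (intro Max_in) auto
  then obtain b where b: "b \<in> A" "y b = Max (y ` A)"
    by auto
  have "y i < y b" if "i \<in> A - {b}" for i
  proof -
    have "y i \<le> y b"
      using that b assms(1) by simp
    moreover have "y i \<noteq> y b"
      using that b(1) inj_onD[OF assms(3), of i b] by auto
    ultimately show ?thesis
      by simp
  qed
  with b(1) show ?thesis
    using that by blast
qed

lemma emeasure_eq_sum_argmax:
  fixes N :: "('i \<Rightarrow> 'a::linorder) set"
  assumes A: "finite A" "A \<noteq> {}" and inj: "\<And>y. y \<in> N \<Longrightarrow> inj_on y A"
    and sets: "\<And>b. b \<in> A \<Longrightarrow> {y \<in> N. \<forall>i\<in>A - {b}. y i < y b} \<in> sets M"
  shows "emeasure M N = (\<Sum>b\<in>A. emeasure M {y \<in> N. \<forall>i\<in>A - {b}. y i < y b})"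
proof -
  define top_at where "top_at b = {y \<in> N. \<forall>i\<in>A - {b}. y i < y b}" for b
  have "y \<in> (\<Union>b\<in>A. top_at b)" if y: "y \<in> N" for y
  proof -
    obtain b where "b \<in> A" "\<forall>i\<in>A - {b}. y i < y b"
      using inj_on_obtain_strict_argmax[OF A inj[OF y]] by blast
    with y show ?thesis
      by (auto simp: top_at_def)
  qed
  then have N_eq: "N = (\<Union>b\<in>A. top_at b)"
    by (auto simp: top_at_def)
  have disj: "disjoint_family_on top_at A"
    unfolding disjoint_family_on_def
  proof (intro ballI impI)
    fix b b' assume "b \<in> A" "b' \<in> A" "b \<noteq> b'"
    then have "y b' < y b \<Longrightarrow> y b < y b' \<Longrightarrow> False" for y :: "'i \<Rightarrow> 'a"
      by simp
    with \<open>b \<in> A\<close> \<open>b' \<in> A\<close> \<open>b \<noteq> b'\<close> show "top_at b \<inter> top_at b' = {}"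
      by (fastforce simp: top_at_def)
  qed
  have "emeasure M N = emeasure M (\<Union>b\<in>A. top_at b)"
    using N_eq by (rule arg_cong)
  also have "\<dots> = (\<Sum>b\<in>A. emeasure M (top_at b))"
    using sets disj A by (intro sum_emeasure[symmetric]) (auto simp: top_at_def[abs_def])
  finally show ?thesis
    by (simp add: top_at_def)
qed

lemma (in product_sigma_finite) emeasure_PiM_insert_sections:
  assumes I: "finite I" "i \<notin> I" and A: "A \<in> sets (PiM (insert i I) M)"
  shows "emeasure (PiM (insert i I) M) A
      = (\<integral>\<^sup>+x. emeasure (M i) {y \<in> space (M i). x(i := y) \<in> A} \<partial>PiM I M)"
proof -
  have "emeasure (PiM (insert i I) M) A = (\<integral>\<^sup>+x. \<integral>\<^sup>+y. indicator A (x(i := y)) \<partial>M i \<partial>PiM I M)"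
    using A by (simp add: product_nn_integral_insert[OF I] flip: nn_integral_indicator)
  also have "\<dots> = (\<integral>\<^sup>+x. emeasure (M i) {y \<in> space (M i). x(i := y) \<in> A} \<partial>PiM I M)"
  proof (intro nn_integral_cong)
    fix x assume "x \<in> space (PiM I M)"
    have "{y \<in> space (M i). x(i := y) \<in> A} = (\<lambda>y. x(i := y)) -` A \<inter> space (M i)"
      by auto
    also have "\<dots> \<in> sets (M i)"
      using measurable_component_update[OF \<open>x \<in> space (PiM I M)\<close> I(2)] A by (rule measurable_sets)
    finally have "{y \<in> space (M i). x(i := y) \<in> A} \<in> sets (M i)" .
    moreover have "(\<integral>\<^sup>+y. indicator A (x(i := y)) \<partial>M i)
        = (\<integral>\<^sup>+y. indicator {y \<in> space (M i). x(i := y) \<in> A} y \<partial>M i)"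
      by (intro nn_integral_cong) (auto split: split_indicator)
    ultimately show "(\<integral>\<^sup>+y. indicator A (x(i := y)) \<partial>M i) = emeasure (M i) {y \<in> space (M i). x(i := y) \<in> A}"
      by simp
  qed
  finally show ?thesis .
qed

lemma (in product_sigma_finite) emeasure_PiM_insert_sections_rev:
  assumes I: "finite I" "i \<notin> I" and A: "A \<in> sets (PiM (insert i I) M)"
  shows "emeasure (PiM (insert i I) M) A
      = (\<integral>\<^sup>+y. emeasure (PiM I M) {x \<in> space (PiM I M). x(i := y) \<in> A} \<partial>M i)"
proof -
  have "emeasure (PiM (insert i I) M) A = (\<integral>\<^sup>+y. \<integral>\<^sup>+x. indicator A (x(i := y)) \<partial>PiM I M \<partial>M i)"
    using A by (simp add: product_nn_integral_insert_rev[OF I] flip: nn_integral_indicator)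
  also have "\<dots> = (\<integral>\<^sup>+y. emeasure (PiM I M) {x \<in> space (PiM I M). x(i := y) \<in> A} \<partial>M i)"
  proof (intro nn_integral_cong)
    fix y assume "y \<in> space (M i)"
    then have "(\<lambda>x. x(i := y)) \<in> measurable (PiM I M) (PiM (insert i I) M)"
      by (intro measurable_fun_upd[where J=I]) auto
    then have "(\<lambda>x. x(i := y)) -` A \<inter> space (PiM I M) \<in> sets (PiM I M)"
      using A by (rule measurable_sets)
    moreover have "{x \<in> space (PiM I M). x(i := y) \<in> A} = (\<lambda>x. x(i := y)) -` A \<inter> space (PiM I M)"
      by auto
    ultimately have "{x \<in> space (PiM I M). x(i := y) \<in> A} \<in> sets (PiM I M)"
      by simp
    moreover have "(\<integral>\<^sup>+x. indicator A (x(i := y)) \<partial>PiM I M)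
        = (\<integral>\<^sup>+x. indicator {x \<in> space (PiM I M). x(i := y) \<in> A} x \<partial>PiM I M)"
      by (intro nn_integral_cong) (auto split: split_indicator)
    ultimately show "(\<integral>\<^sup>+x. indicator A (x(i := y)) \<partial>PiM I M) = emeasure (PiM I M) {x \<in> space (PiM I M). x(i := y) \<in> A}"
      by simp
  qed
  finally show ?thesis .
qed

lemma ball_insert_fun_upd:
  "b \<notin> A \<Longrightarrow> (\<forall>i\<in>insert b A. P ((y(b := t)) i)) \<longleftrightarrow> P t \<and> (\<forall>i\<in>A. P (y i))"
  by (metis fun_upd_apply insert_iff)

lemma pairwise_insert_fun_upd:
  "b \<notin> A \<Longrightarrow> (\<forall>i\<in>insert b A. \<forall>j\<in>insert b A. j \<noteq> i \<longrightarrow> R ((y(b := t)) i) ((y(b := t)) j))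
    \<longleftrightarrow> (\<forall>j\<in>A. R t (y j) \<and> R (y j) t) \<and> (\<forall>i\<in>A. \<forall>j\<in>A. j \<noteq> i \<longrightarrow> R (y i) (y j))"
  by auto

lemma fun_upd_in_space_PiM:
  "y \<in> space (PiM A M) \<Longrightarrow> t \<in> space (M b) \<Longrightarrow> y(b := t) \<in> space (PiM (insert b A) M)"
  by (auto simp: space_PiM PiE_def extensional_def)

lemma PiM_section_eq_if:
  assumes "\<And>y. y \<in> space (PiM A M) \<Longrightarrow> y(b := t) \<in> N \<longleftrightarrow> P \<and> y \<in> S" "S \<subseteq> space (PiM A M)"
  shows "{y \<in> space (PiM A M). y(b := t) \<in> N} = (if P then S else {})"
proof -
  have "{y \<in> space (PiM A M). y(b := t) \<in> N} = {y \<in> space (PiM A M). P \<and> y \<in> S}"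
    by (intro Collect_cong conj_cong refl assms(1))
  with assms(2) show ?thesis
    by auto
qed

section \<open>Gaps between sorted angles\<close>

definition ccw_dist :: "real \<Rightarrow> real \<Rightarrow> real" where
  "ccw_dist u v = (if u \<le> v then v - u else v - u + 2 * pi)"

lemma ccw_dist_measurable [measurable (raw)]:
  assumes [measurable]: "f \<in> borel_measurable M" "g \<in> borel_measurable M"
  shows "(\<lambda>w. ccw_dist (f w) (g w)) \<in> borel_measurable M"
  unfolding ccw_dist_def by measurable

lemma ccw_dist_both_gt_iff_abs_gt:
  assumes "0 < x" "\<bar>u - v\<bar> < 2 * pi - 2 * x"
  shows "x < ccw_dist u v \<and> x < ccw_dist v u \<longleftrightarrow> x < \<bar>u - v\<bar>"
  using assms by (auto simp: ccw_dist_def split: if_splits)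

lemma ccw_dist_below_gt_iff:
  assumes "0 < x"
  shows "u < t \<and> x < ccw_dist u t \<and> x < ccw_dist t u \<longleftrightarrow> t + x - 2 * pi < u \<and> u < t - x"
  using assms by (auto simp: ccw_dist_def)

definition internodal_angle :: "nat \<Rightarrow> (nat \<Rightarrow> real) \<Rightarrow> nat \<Rightarrow> real" where
  "internodal_angle L th k = (let xs = sorted_angles L th in
     if k < L - 1 then xs ! (k + 1) - xs ! k else 2 * pi - (xs ! (L - 1) - xs ! 0))"

definition wide_gap_starts :: "real \<Rightarrow> nat \<Rightarrow> (nat \<Rightarrow> real) \<Rightarrow> nat set" where
  "wide_gap_starts x L th = {i. i < L \<and> (\<forall>j<L. j \<noteq> i \<longrightarrow> x < ccw_dist (th i) (th j))}"

lemma length_sorted_angles [simp]: "length (sorted_angles L th) = L"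
  by (simp add: sorted_angles_def)

lemma set_sorted_angles: "set (sorted_angles L th) = th ` {..<L}"
  by (auto simp: sorted_angles_def)

lemma sorted_angles_strict_mono:
  assumes "inj_on th {..<L}" "i < j" "j < L"
  shows "sorted_angles L th ! i < sorted_angles L th ! j"
proof -
  have "sorted_wrt (<) (sorted_angles L th)"
    using assms(1) by (simp add: strict_sorted_iff sorted_angles_def distinct_map atLeast0LessThan)
  with assms(2,3) show ?thesis
    by (simp add: sorted_wrt_nth_less)
qed

lemma sorted_angles_in_range:
  assumes "\<And>k. k < L \<Longrightarrow> th k \<in> {0..<2 * pi}" "k < L"
  shows "sorted_angles L th ! k \<in> {0..<2 * pi}"
  using nth_mem[of k "sorted_angles L th"] assms by (auto simp: set_sorted_angles)

lemma internodal_angles_eq_map: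
  assumes "L \<ge> 1"
  shows "internodal_angles L th = map (internodal_angle L th) [0..<L]"
proof -
  define xs where "xs = sorted_angles L th"
  have "[0..<L] = [0..<L - 1] @ [L - 1]"
    using assms by (metis Suc_diff_1 less_le_trans upt_Suc_append zero_le zero_less_one)
  moreover have "length xs = L"
    by (simp add: xs_def)
  moreover from this assms have "xs \<noteq> []"
    by auto
  ultimately show ?thesis
    unfolding internodal_angles_def internodal_angle_def Let_def xs_def[symmetric]
    by (simp add: last_conv_nth hd_conv_nth)
qed

lemma internodal_angle_nonneg:
  assumes "\<And>k. k < L \<Longrightarrow> th k \<in> {0..<2 * pi}" "k < L"
  shows "0 \<le> internodal_angle L th k"
proof (cases "k < L - 1")
  case True
  then have "sorted_angles L th ! k \<le> sorted_angles L th ! (k + 1)"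
    by (intro sorted_nth_mono) (auto simp: sorted_angles_def)
  with True show ?thesis
    by (simp add: internodal_angle_def Let_def)
next
  case False
  then show ?thesis
    using sorted_angles_in_range[of L th 0] sorted_angles_in_range[of L th "L - 1"] assms
    by (simp add: internodal_angle_def Let_def)
qed

lemma sum_internodal_angle:
  assumes "L \<ge> 2"
  shows "(\<Sum>k<L. internodal_angle L th k) = 2 * pi"
proof -
  define xs where "xs = sorted_angles L th"
  have "{..<L} = insert (L - 1) {..<L - 1}"
    using assms by auto
  then have "(\<Sum>k<L. internodal_angle L th k)
      = internodal_angle L th (L - 1) + (\<Sum>k<L - 1. xs ! Suc k - xs ! k)"
    by (simp add: internodal_angle_def xs_def Let_def)
  also have "(\<Sum>k<L - 1. xs ! Suc k - xs ! k) = xs ! (L - 1) - xs ! 0"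
    by (rule sum_lessThan_telescope)
  finally show ?thesis
    by (simp add: internodal_angle_def xs_def Let_def)
qed

lemma internodal_angle_attained:
  assumes L: "L \<ge> 2" and inj: "inj_on th {..<L}" and k: "k < L"
  defines "xs \<equiv> sorted_angles L th"
  obtains n where "n < L" "n \<noteq> k" "ccw_dist (xs ! k) (xs ! n) = internodal_angle L th k"
proof (cases "k < L - 1")
  case True
  then have "xs ! k < xs ! (k + 1)"
    using sorted_angles_strict_mono[OF inj] by (simp add: xs_def)
  with True show ?thesis
    by (intro that[of "k + 1"]) (auto simp: internodal_angle_def xs_def ccw_dist_def Let_def)
next
  case False
  with k have "k = L - 1"
    by simp
  moreover from this L have "xs ! 0 < xs ! k"
    using sorted_angles_strict_mono[OF inj, of 0 k] by (simp add: xs_def)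
  ultimately show ?thesis
    using L by (intro that[of 0]) (auto simp: internodal_angle_def xs_def ccw_dist_def Let_def)
qed

lemma internodal_angle_le_ccw_dist:
  assumes rng: "\<And>k. k < L \<Longrightarrow> th k \<in> {0..<2 * pi}" and inj: "inj_on th {..<L}"
    and k: "k < L" and m: "m < L" "m \<noteq> k"
  defines "xs \<equiv> sorted_angles L th"
  shows "internodal_angle L th k \<le> ccw_dist (xs ! k) (xs ! m)"
proof -
  have lt: "\<And>i j. i < j \<Longrightarrow> j < L \<Longrightarrow> xs ! i < xs ! j"
    using sorted_angles_strict_mono[OF inj] by (simp add: xs_def)
  have r: "\<And>i. i < L \<Longrightarrow> xs ! i \<in> {0..<2 * pi}"
    using sorted_angles_in_range[OF rng] by (simp add: xs_def)
  have gap: "internodal_angle L th k =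
      (if k < L - 1 then xs ! (k + 1) - xs ! k else 2 * pi - (xs ! (L - 1) - xs ! 0))"
    by (simp add: internodal_angle_def xs_def Let_def)
  show ?thesis
  proof (cases "k < m")
    case True
    then have "xs ! (k + 1) \<le> xs ! m"
      using m lt[of "k + 1" m] by (cases "k + 1 = m") auto
    then show ?thesis
      using True m lt[of k m] by (auto simp: gap ccw_dist_def)
  next
    case False
    then have "xs ! m < xs ! k"
      using m k lt[of m k] by simp
    moreover have "xs ! 0 \<le> xs ! m" "0 \<le> xs ! m"
      using lt[of 0 m] r[of m] m(1) by (auto simp: le_less)
    moreover have "k < L - 1 \<Longrightarrow> xs ! (k + 1) < 2 * pi" "\<not> k < L - 1 \<Longrightarrow> k = L - 1"
      using r[of "k + 1"] k by auto
    ultimately show ?thesis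
      using gap by (cases "k < L - 1") (auto simp: ccw_dist_def)
  qed
qed

lemma internodal_angle_gt_iff:
  assumes "L \<ge> 2" "\<And>k. k < L \<Longrightarrow> th k \<in> {0..<2 * pi}" "inj_on th {..<L}" "k < L"
  defines "xs \<equiv> sorted_angles L th"
  shows "x < internodal_angle L th k \<longleftrightarrow> (\<forall>m<L. m \<noteq> k \<longrightarrow> x < ccw_dist (xs ! k) (xs ! m))"
  using internodal_angle_attained[of L th k] internodal_angle_le_ccw_dist[of L th k] assms
  unfolding xs_def by (metis less_le_trans)

lemma length_filter_internodal_angles_gt:
  assumes L: "L \<ge> 2" and rng: "\<And>k. k < L \<Longrightarrow> th k \<in> {0..<2 * pi}"
    and inj: "inj_on th {..<L}"
  shows "length (filter ((<) x) (internodal_angles L th)) = card (wide_gap_starts x L th)"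
proof -
  define xs where "xs = sorted_angles L th"
  define wide where "wide v \<longleftrightarrow> (\<forall>w\<in>th ` {..<L}. w \<noteq> v \<longrightarrow> x < ccw_dist v w)" for v
  have "distinct xs" "length xs = L"
    using inj by (simp_all add: xs_def sorted_angles_def distinct_map atLeast0LessThan)
  have "x < internodal_angle L th k \<longleftrightarrow> wide (xs ! k)" if "k < L" for k
  proof -
    have "wide (xs ! k) \<longleftrightarrow> (\<forall>m<L. xs ! m \<noteq> xs ! k \<longrightarrow> x < ccw_dist (xs ! k) (xs ! m))"
      by (simp add: wide_def set_sorted_angles[symmetric] xs_def all_set_conv_all_nth)
    also have "\<dots> \<longleftrightarrow> (\<forall>m<L. m \<noteq> k \<longrightarrow> x < ccw_dist (xs ! k) (xs ! m))"
      using \<open>distinct xs\<close> \<open>length xs = L\<close> that by (simp add: nth_eq_iff_index_eq)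
    finally show ?thesis
      using internodal_angle_gt_iff[OF L rng inj that] by (simp add: xs_def)
  qed
  then have "length (filter ((<) x) (internodal_angles L th)) = card {k. k < L \<and> wide (xs ! k)}"
    using L by (auto simp: internodal_angles_eq_map length_filter_conv_card intro!: arg_cong[where f=card])
  also have "\<dots> = card {i. i < L \<and> wide (map th [0..<L] ! i)}"
    using card_sort_nth[of "map th [0..<L]" wide] by (simp add: xs_def sorted_angles_def)
  also have "{i. i < L \<and> wide (map th [0..<L] ! i)} = wide_gap_starts x L th"
    using inj by (auto simp: wide_def wide_gap_starts_def inj_on_eq_iff)
  finally show ?thesis .
qed

lemma second_largest_angle_le_iff_count:
  assumes "L \<ge> 2"
  shows "second_largest_angle L th \<le> x \<longleftrightarrow> length (filter ((<) x) (internodal_angles L th)) \<le> 1"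
proof -
  have len: "length (internodal_angles L th) = L"
    using assms by (simp add: internodal_angles_eq_map)
  have "second_largest_angle L th \<le> x \<longleftrightarrow> L - 2 < length (filter (\<lambda>z. z \<le> x) (internodal_angles L th))"
    unfolding second_largest_angle_def using assms len by (intro sort_nth_le_iff) auto
  moreover have "length (filter (\<lambda>z. z \<le> x) (internodal_angles L th))
      + length (filter ((<) x) (internodal_angles L th)) = L"
    using sum_length_filter_compl[of "\<lambda>z. z \<le> x" "internodal_angles L th"] len
    by (simp add: not_le)
  ultimately show ?thesis
    using assms by linarith
qed

lemma second_largest_angle_le_iff:
  assumes "L \<ge> 2" "\<And>k. k < L \<Longrightarrow> th k \<in> {0..<2 * pi}" "inj_on th {..<L}"
  shows "second_largest_angle L th \<le> x \<longleftrightarrow> card (wide_gap_starts x L th) \<le> 1"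
  using second_largest_angle_le_iff_count length_filter_internodal_angles_gt assms by simp

lemma second_largest_angle_is_internodal_angle:
  assumes "L \<ge> 2"
  obtains k where "k < L" "second_largest_angle L th = internodal_angle L th k"
proof -
  have "second_largest_angle L th \<in> set (sort (internodal_angles L th))"
    unfolding second_largest_angle_def using assms by (intro nth_mem) (simp add: internodal_angles_eq_map)
  then obtain k where "k < L" "second_largest_angle L th = internodal_angle L th k"
    using assms by (auto simp: internodal_angles_eq_map)
  then show ?thesis
    by (rule that)
qed

lemma second_largest_angle_bounds:
  assumes L: "L \<ge> 2" and rng: "\<And>k. k < L \<Longrightarrow> th k \<in> {0..<2 * pi}"
  shows "0 \<le> second_largest_angle L th" "second_largest_angle L th \<le> pi"
proof -
  obtain k where "k < L" "second_largest_angle L th = internodal_angle L th k"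
    using L by (rule second_largest_angle_is_internodal_angle)
  then show "0 \<le> second_largest_angle L th"
    using internodal_angle_nonneg[OF rng] by simp
  define G where "G = {k. k < L \<and> pi < internodal_angle L th k}"
  have "k1 = k2" if k: "k1 \<in> G" "k2 \<in> G" for k1 k2
  proof (rule ccontr)
    assume "k1 \<noteq> k2"
    then have "internodal_angle L th k1 + internodal_angle L th k2
        = (\<Sum>k\<in>{k1, k2}. internodal_angle L th k)"
      by simp
    also have "\<dots> \<le> (\<Sum>k<L. internodal_angle L th k)"
      using k internodal_angle_nonneg[OF rng] by (intro sum_mono2) (auto simp: G_def)
    finally show False
      using k sum_internodal_angle[OF L] by (auto simp: G_def)
  qed
  then have "card G \<le> 1"
    using card_le_Suc0_iff_eq[of G] by (simp add: G_def)
  moreover have "length (filter ((<) pi) (internodal_angles L th)) = card G"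
    using L by (auto simp: internodal_angles_eq_map length_filter_conv_card G_def
        intro!: arg_cong[where f=card])
  ultimately show "second_largest_angle L th \<le> pi"
    using L by (simp add: second_largest_angle_le_iff_count)
qed

lemma second_largest_angle_is_diff:
  assumes "L \<ge> 2"
  obtains i j where "i < L" "j < L"
    "second_largest_angle L th = th j - th i \<or> second_largest_angle L th = 2 * pi - (th j - th i)"
proof -
  define xs where "xs = sorted_angles L th"
  have angle: "\<exists>i<L. xs ! m = th i" if "m < L" for m
    using nth_mem[of m xs] that by (auto simp: xs_def set_sorted_angles)
  obtain k where k: "k < L" "second_largest_angle L th = internodal_angle L th k"
    using assms second_largest_angle_is_internodal_angle by blast
  show ?thesis
  proof (cases "k < L - 1")
    case True
    then have "k < L" "k + 1 < L"
      by auto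
    then obtain i j where "i < L" "j < L" "xs ! k = th i" "xs ! (k + 1) = th j"
      using angle by metis
    with True k show ?thesis
      by (intro that[of i j]) (auto simp: internodal_angle_def xs_def Let_def)
  next
    case False
    obtain i j where "i < L" "j < L" "xs ! 0 = th i" "xs ! (L - 1) = th j"
      using angle[of 0] angle[of "L - 1"] assms by auto
    with False k show ?thesis
      by (intro that[of i j]) (auto simp: internodal_angle_def xs_def Let_def)
  qed
qed

lemma second_largest_angle_measurable:
  assumes L: "L \<ge> 2" and th: "\<And>k. k < L \<Longrightarrow> (\<lambda>w. th w k) \<in> borel_measurable M"
  shows "(\<lambda>w. second_largest_angle L (th w)) \<in> borel_measurable M"
proof -
  have sorted: "(\<lambda>w. sorted_angles L (th w) ! m) \<in> borel_measurable M" if "m < L" for m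
    unfolding sorted_angles_def using th that by (intro sort_nth_measurable) auto
  have gap: "(\<lambda>w. internodal_angle L (th w) k) \<in> borel_measurable M" for k
  proof (cases "k < L - 1")
    case True
    then show ?thesis
      by (simp add: internodal_angle_def Let_def sorted borel_measurable_diff)
  next
    case False
    then show ?thesis
      using L by (simp add: internodal_angle_def Let_def sorted borel_measurable_diff)
  qed
  have "(\<lambda>w. sort (map (\<lambda>k. internodal_angle L (th w) k) [0..<L]) ! (L - 2)) \<in> borel_measurable M"
    using L by (intro sort_nth_measurable gap) auto
  then show ?thesis
    using L by (simp add: second_largest_angle_def internodal_angles_eq_map)
qed

section \<open>Separated configurations of uniform angles\<close>

definition unif_circle :: "real measure" where
  "unif_circle = uniform_measure lborel {0..<2 * pi}"

lemma sets_unif_circle [measurable_cong, simp]: "sets unif_circle = sets borel"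
  by (simp add: unif_circle_def)

lemma space_unif_circle [simp]: "space unif_circle = UNIV"
  by (simp add: unif_circle_def)

lemma prob_space_unif_circle: "prob_space unif_circle"
  unfolding unif_circle_def by (rule prob_space_uniform_measure) auto

lemma product_sigma_finite_unif_circle: "product_sigma_finite (\<lambda>_. unif_circle)"
  unfolding product_sigma_finite_def
  using prob_space_unif_circle by (simp add: prob_space_imp_sigma_finite)

lemma emeasure_unif_circle:
  "A \<in> sets borel \<Longrightarrow> emeasure unif_circle A = emeasure lborel ({0..<2 * pi} \<inter> A) / ennreal (2 * pi)"
  by (simp add: unif_circle_def)

lemma nn_integral_power_Icc:
  fixes c hi q :: real
  assumes "0 \<le> q"
  shows "(\<integral>\<^sup>+t. ennreal (q * (t - c) ^ n) * indicator {c..hi} t \<partial>lborel)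
      = ennreal (q * (max 0 (hi - c)) ^ Suc n / Suc n)"
proof (cases "c \<le> hi")
  case True
  have "(\<integral>\<^sup>+t. ennreal (q * (t - c) ^ n) * indicator {c..hi} t \<partial>lborel)
      = ennreal (q / Suc n * (hi - c) ^ Suc n - q / Suc n * (c - c) ^ Suc n)"
  proof (rule nn_integral_FTC_Icc)
    fix t :: real
    have "((\<lambda>t. (t - c) ^ Suc n) has_real_derivative real (Suc n) * (t - c) ^ n) (at t)"
      by (rule derivative_eq_intros refl | simp)+
    from DERIV_cmult[OF this, of "q / Suc n"]
    show "((\<lambda>t. q / Suc n * (t - c) ^ Suc n) has_real_derivative q * (t - c) ^ n) (at t)"
      by simp
  qed (use True assms in auto)
  with True show ?thesis
    by (simp add: max_def)
qed (simp add: max_def)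

lemma nn_integral_unif_circle_ramp:
  fixes lo hi c q :: real and n :: nat
  assumes "0 \<le> lo" "lo \<le> c" "hi \<le> 2 * pi" "n = 0 \<Longrightarrow> c = lo" "0 \<le> q"
    and S: "{lo<..<hi} \<subseteq> S" "S \<subseteq> {lo..hi}" "S \<in> sets borel"
  shows "(\<integral>\<^sup>+t. indicator S t * ennreal (q * (max 0 (t - c)) ^ n) \<partial>unif_circle)
       = ennreal (q * (max 0 (hi - c)) ^ Suc n / (Suc n * (2 * pi)))"
proof -
  have "(\<integral>\<^sup>+t. indicator S t * ennreal (q * (max 0 (t - c)) ^ n) * indicator {0..<2 * pi} t \<partial>lborel)
      = (\<integral>\<^sup>+t. ennreal (q * (t - c) ^ n) * indicator {c..hi} t \<partial>lborel)"
  proof (rule nn_integral_cong_AE)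
    have "AE t in lborel. t \<noteq> lo" "AE t in lborel. t \<noteq> hi"
      by (rule AE_lborel_singleton)+
    then show "AE t in lborel. indicator S t * ennreal (q * (max 0 (t - c)) ^ n) * indicator {0..<2 * pi} t
        = ennreal (q * (t - c) ^ n) * indicator {c..hi} t"
    proof eventually_elim
      case (elim t)
      show ?case
      proof (cases "lo < t \<and> t < hi")
        case True
        with S assms(1,3) have "t \<in> S" "t \<in> {0..<2 * pi}"
          by auto
        moreover have "n \<noteq> 0" if "t < c"
          using that True assms(4) by auto
        ultimately show ?thesis
          using True by (cases "c \<le> t") (auto simp: indicator_def max_def zero_power)
      next
        case False
        with elim S assms(2) have "t \<notin> S" "t \<notin> {c..hi}"
          by auto
        then show ?thesis
          by simp
      qed
    qed
  qed
  also have "\<dots> = ennreal (q * (max 0 (hi - c)) ^ Suc n / Suc n)"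
    using assms(5) by (rule nn_integral_power_Icc)
  moreover have "(\<lambda>t. indicator S t * ennreal (q * (max 0 (t - c)) ^ n)) \<in> borel_measurable borel"
    using S(3) by measurable
  ultimately show ?thesis
    unfolding unif_circle_def using assms(5)
    by (subst nn_integral_uniform_measure) (auto simp: divide_ennreal)
qed

definition spaced_points :: "real \<Rightarrow> 'i set \<Rightarrow> real \<Rightarrow> real \<Rightarrow> ('i \<Rightarrow> real) set" where
  "spaced_points x A lo hi = {y \<in> space (PiM A (\<lambda>_. unif_circle)).
     (\<forall>i\<in>A. y i \<in> {0..<2 * pi} \<and> lo < y i \<and> y i < hi) \<and> (\<forall>i\<in>A. \<forall>j\<in>A. j \<noteq> i \<longrightarrow> x < \<bar>y i - y j\<bar>)}"

lemma spaced_points_sets [measurable]: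
  "finite A \<Longrightarrow> spaced_points x A lo hi \<in> sets (PiM A (\<lambda>_. unif_circle))"
  unfolding spaced_points_def by measurable

lemma spaced_points_top_section:
  assumes b: "b \<notin> A" and y: "y \<in> space (PiM A (\<lambda>_. unif_circle))" and x: "0 < x"
  shows "y(b := t) \<in> {z \<in> spaced_points x (insert b A) lo hi. \<forall>i\<in>A. z i < z b}
     \<longleftrightarrow> t \<in> {0..<2 * pi} \<and> lo < t \<and> t < hi \<and> y \<in> spaced_points x A lo (t - x)"
proof -
  have top: "(\<forall>i\<in>A. (y(b := t)) i < (y(b := t)) b) \<longleftrightarrow> (\<forall>i\<in>A. y i < t)"
    using b by auto
  have "u < t \<and> x < \<bar>t - u\<bar> \<and> x < \<bar>u - t\<bar> \<longleftrightarrow> u < t - x" for u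
    using x by auto
  then show ?thesis
    using fun_upd_in_space_PiM[OF y, of t b] y x
    unfolding spaced_points_def mem_Collect_eq top
      ball_insert_fun_upd[OF b, where P="\<lambda>v. v \<in> {0..<2 * pi} \<and> lo < v \<and> v < hi"]
      pairwise_insert_fun_upd[OF b, where R="\<lambda>u v. x < \<bar>u - v\<bar>"]
    by (auto 0 4)
qed

lemma sets_PiM_unif_circle_top:
  assumes "finite A" "b \<in> A" "N \<in> sets (PiM A (\<lambda>_. unif_circle))"
  shows "{y \<in> N. \<forall>i\<in>A - {b}. y i < y b} \<in> sets (PiM A (\<lambda>_. unif_circle))"
proof -
  have "{y \<in> N. \<forall>i\<in>A - {b}. y i < y b} = N \<inter> {y \<in> space (PiM A (\<lambda>_. unif_circle)). \<forall>i\<in>A. i \<noteq> b \<longrightarrow> y i < y b}"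
    using sets.sets_into_space[OF assms(3)] by auto
  also have "\<dots> \<in> sets (PiM A (\<lambda>_. unif_circle))"
  proof (rule sets.Int[OF assms(3)])
    show "{y \<in> space (PiM A (\<lambda>_. unif_circle)). \<forall>i\<in>A. i \<noteq> b \<longrightarrow> y i < y b} \<in> sets (PiM A (\<lambda>_. unif_circle))"
      using assms(1,2) by measurable
  qed
  finally show ?thesis .
qed

lemma inj_on_spaced_points: "0 < x \<Longrightarrow> y \<in> spaced_points x A lo hi \<Longrightarrow> inj_on y A"
  by (fastforce simp: spaced_points_def inj_on_def)

definition spaced_volume :: "real \<Rightarrow> nat \<Rightarrow> real \<Rightarrow> real \<Rightarrow> real" where
  "spaced_volume x n lo hi = (max 0 (min hi (2 * pi) - max lo 0 - (real n - 1) * x)) ^ n / (2 * pi) ^ n"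

lemma emeasure_spaced_points_top:
  fixes A :: "'i set"
  assumes A: "finite A" "b \<notin> A" and x: "0 < x"
    and IH: "\<And>hi. emeasure (PiM A (\<lambda>_. unif_circle)) (spaced_points x A lo hi)
      = ennreal (spaced_volume x (card A) lo hi)"
  shows "emeasure (PiM (insert b A) (\<lambda>_. unif_circle)) {z \<in> spaced_points x (insert b A) lo hi. \<forall>i\<in>A. z i < z b}
      = ennreal (spaced_volume x (Suc (card A)) lo hi / Suc (card A))"
proof -
  interpret product_sigma_finite "\<lambda>_::'i. unif_circle"
    by (rule product_sigma_finite_unif_circle)
  define n where "n = card A"
  define c where "c = max lo 0 + real n * x"
  define q :: real where "q = 1 / (2 * pi) ^ n"
  define T where "T = {t. t \<in> {0..<2 * pi} \<and> lo < t \<and> t < hi}"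
  have top_sets: "{z \<in> spaced_points x (insert b A) lo hi. \<forall>i\<in>A. z i < z b} \<in> sets (PiM (insert b A) (\<lambda>_. unif_circle))"
    using sets_PiM_unif_circle_top[of "insert b A" b "spaced_points x (insert b A) lo hi"] A by simp
  have slice: "{y \<in> space (PiM A (\<lambda>_. unif_circle)). y(b := t) \<in> {z \<in> spaced_points x (insert b A) lo hi. \<forall>i\<in>A. z i < z b}}
      = (if t \<in> T then spaced_points x A lo (t - x) else {})" for t
    using spaced_points_top_section[OF A(2) _ x, of _ t lo hi]
    by (intro PiM_section_eq_if) (auto simp: T_def spaced_points_def)
  have lower: "emeasure (PiM A (\<lambda>_. unif_circle)) (spaced_points x A lo (t - x)) = ennreal (q * (max 0 (t - c)) ^ n)"
    if "t \<in> T" for t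
  proof -
    have "min (t - x) (2 * pi) - max lo 0 - (real n - 1) * x = t - c"
      using that x by (auto simp: T_def c_def algebra_simps)
    then show ?thesis
      by (simp add: IH spaced_volume_def q_def n_def)
  qed
  have "emeasure (PiM (insert b A) (\<lambda>_. unif_circle)) {z \<in> spaced_points x (insert b A) lo hi. \<forall>i\<in>A. z i < z b}
      = (\<integral>\<^sup>+t. emeasure (PiM A (\<lambda>_. unif_circle))
          {y \<in> space (PiM A (\<lambda>_. unif_circle)). y(b := t) \<in> {z \<in> spaced_points x (insert b A) lo hi. \<forall>i\<in>A. z i < z b}}
          \<partial>unif_circle)"
    using A top_sets by (rule emeasure_PiM_insert_sections_rev)
  also have "\<dots> = (\<integral>\<^sup>+t. indicator T t * ennreal (q * (max 0 (t - c)) ^ n) \<partial>unif_circle)"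
    unfolding slice by (intro nn_integral_cong) (simp add: lower)
  also have "\<dots> = ennreal (q * (max 0 (min hi (2 * pi) - c)) ^ Suc n / (Suc n * (2 * pi)))"
    using x by (intro nn_integral_unif_circle_ramp) (auto simp: T_def c_def q_def)
  also have "min hi (2 * pi) - c = min hi (2 * pi) - max lo 0 - (real (Suc n) - 1) * x"
    by (simp add: c_def)
  also have "q * (max 0 \<dots>) ^ Suc n / (Suc n * (2 * pi)) = spaced_volume x (Suc n) lo hi / Suc n"
    unfolding q_def spaced_volume_def by (simp add: field_simps del: of_nat_Suc)
  finally show ?thesis
    by (simp add: n_def)
qed

lemma emeasure_spaced_points:
  fixes A :: "'i set"
  assumes "finite A" "0 < x"
  shows "emeasure (PiM A (\<lambda>_. unif_circle)) (spaced_points x A lo hi) = ennreal (spaced_volume x (card A) lo hi)"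
  using assms
proof (induction "card A" arbitrary: A hi)
  case 0
  then show ?case
    by (simp add: spaced_points_def spaced_volume_def space_PiM_empty)
next
  case (Suc n)
  have top: "emeasure (PiM A (\<lambda>_. unif_circle)) {y \<in> spaced_points x A lo hi. \<forall>i\<in>A - {b}. y i < y b}
      = ennreal (spaced_volume x (Suc n) lo hi / Suc n)" if b: "b \<in> A" for b
    using emeasure_spaced_points_top[of "A - {b}" b x lo hi] Suc b by (simp add: insert_absorb)
  have "emeasure (PiM A (\<lambda>_. unif_circle)) (spaced_points x A lo hi)
      = (\<Sum>b\<in>A. emeasure (PiM A (\<lambda>_. unif_circle)) {y \<in> spaced_points x A lo hi. \<forall>i\<in>A - {b}. y i < y b})"
    using Suc by (intro emeasure_eq_sum_argmax inj_on_spaced_points sets_PiM_unif_circle_top) auto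
  also have "\<dots> = of_nat (Suc n) * ennreal (spaced_volume x (Suc n) lo hi / Suc n)"
    using Suc.hyps(2) by (simp add: top)
  also have "\<dots> = ennreal (real (Suc n) * (spaced_volume x (Suc n) lo hi / Suc n))"
    by (subst ennreal_mult') (auto simp: ennreal_of_nat_eq_real_of_nat)
  finally show ?case
    using Suc.hyps(2) by simp
qed

definition wide_gaps_after :: "real \<Rightarrow> 'i set \<Rightarrow> 'i set \<Rightarrow> ('i \<Rightarrow> real) set" where
  "wide_gaps_after x I K = {y \<in> space (PiM K (\<lambda>_. unif_circle)). (\<forall>k\<in>K. y k \<in> {0..<2 * pi})
      \<and> (\<forall>i\<in>I. \<forall>j\<in>K. j \<noteq> i \<longrightarrow> x < ccw_dist (y i) (y j))}"

lemma wide_gaps_after_sets [measurable]: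
  assumes "finite K" "I \<subseteq> K"
  shows "wide_gaps_after x I K \<in> sets (PiM K (\<lambda>_. unif_circle))"
proof -
  have "wide_gaps_after x I K = {y \<in> space (PiM K (\<lambda>_. unif_circle)). (\<forall>k\<in>K. y k \<in> {0..<2 * pi})
      \<and> (\<forall>i\<in>K. \<forall>j\<in>K. i \<in> I \<longrightarrow> j \<noteq> i \<longrightarrow> x < ccw_dist (y i) (y j))}"
    using assms(2) by (auto simp: wide_gaps_after_def)
  also have "\<dots> \<in> sets (PiM K (\<lambda>_. unif_circle))"
    using assms(1) by measurable
  finally show ?thesis .
qed

lemma pairwise_ccw_dist_gt_iff_abs_gt:
  assumes x: "0 < x" and window: "\<forall>i\<in>A. t + x - 2 * pi < y i \<and> y i < t - x"
  shows "(\<forall>i\<in>A. \<forall>j\<in>A. j \<noteq> i \<longrightarrow> x < ccw_dist (y i) (y j))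
      \<longleftrightarrow> (\<forall>i\<in>A. \<forall>j\<in>A. j \<noteq> i \<longrightarrow> x < \<bar>y i - y j\<bar>)"
proof -
  have both: "x < ccw_dist (y i) (y j) \<and> x < ccw_dist (y j) (y i) \<longleftrightarrow> x < \<bar>y i - y j\<bar>"
    if "i \<in> A" "j \<in> A" for i j
  proof -
    from that window have "t + x - 2 * pi < y i" "y i < t - x" "t + x - 2 * pi < y j" "y j < t - x"
      by auto
    with x show ?thesis
      by (intro ccw_dist_both_gt_iff_abs_gt) (auto simp: abs_less_iff)
  qed
  show ?thesis
  proof (intro iffI ballI impI)
    fix i j assume "\<forall>i\<in>A. \<forall>j\<in>A. j \<noteq> i \<longrightarrow> x < ccw_dist (y i) (y j)" "i \<in> A" "j \<in> A" "j \<noteq> i"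
    with both[of i j] show "x < \<bar>y i - y j\<bar>"
      by auto
  next
    fix i j assume "\<forall>i\<in>A. \<forall>j\<in>A. j \<noteq> i \<longrightarrow> x < \<bar>y i - y j\<bar>" "i \<in> A" "j \<in> A" "j \<noteq> i"
    with both[of i j] show "x < ccw_dist (y i) (y j)"
      by auto
  qed
qed

lemma wide_gaps_after_top_section:
  assumes b: "b \<notin> A" and y: "y \<in> space (PiM A (\<lambda>_. unif_circle))" and x: "0 < x"
  shows "y(b := t) \<in> {z \<in> wide_gaps_after x (insert b A) (insert b A). \<forall>i\<in>A. z i < z b}
     \<longleftrightarrow> t \<in> {0..<2 * pi} \<and> y \<in> spaced_points x A (t + x - 2 * pi) (t - x)"
proof -
  let ?window = "\<forall>i\<in>A. t + x - 2 * pi < y i \<and> y i < t - x"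
  have window: "(\<forall>i\<in>A. y i < t) \<and> (\<forall>j\<in>A. x < ccw_dist t (y j) \<and> x < ccw_dist (y j) t) \<longleftrightarrow> ?window"
    using ccw_dist_below_gt_iff[OF x, of _ t] by auto
  have top: "(\<forall>i\<in>A. (y(b := t)) i < (y(b := t)) b) \<longleftrightarrow> (\<forall>i\<in>A. y i < t)"
    using b by auto
  have "y(b := t) \<in> {z \<in> wide_gaps_after x (insert b A) (insert b A). \<forall>i\<in>A. z i < z b}
      \<longleftrightarrow> t \<in> {0..<2 * pi} \<and> (\<forall>i\<in>A. y i \<in> {0..<2 * pi})
        \<and> ((\<forall>i\<in>A. y i < t) \<and> (\<forall>j\<in>A. x < ccw_dist t (y j) \<and> x < ccw_dist (y j) t))
        \<and> (\<forall>i\<in>A. \<forall>j\<in>A. j \<noteq> i \<longrightarrow> x < ccw_dist (y i) (y j))"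
    using fun_upd_in_space_PiM[OF y, of t b]
    unfolding wide_gaps_after_def mem_Collect_eq top
      ball_insert_fun_upd[OF b, where P="\<lambda>v. v \<in> {0..<2 * pi}"]
      pairwise_insert_fun_upd[OF b, where R="\<lambda>u v. x < ccw_dist u v"]
    by auto
  also have "\<dots> \<longleftrightarrow> t \<in> {0..<2 * pi} \<and> (\<forall>i\<in>A. y i \<in> {0..<2 * pi}) \<and> ?window
      \<and> (\<forall>i\<in>A. \<forall>j\<in>A. j \<noteq> i \<longrightarrow> x < \<bar>y i - y j\<bar>)"
    unfolding window by (intro conj_cong refl pairwise_ccw_dist_gt_iff_abs_gt[OF x])
  also have "\<dots> \<longleftrightarrow> t \<in> {0..<2 * pi} \<and> y \<in> spaced_points x A (t + x - 2 * pi) (t - x)"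
    using y by (auto simp: spaced_points_def)
  finally show ?thesis .
qed

lemma inj_on_wide_gaps_after_self: "0 < x \<Longrightarrow> y \<in> wide_gaps_after x I I \<Longrightarrow> inj_on y I"
  by (fastforce simp: wide_gaps_after_def inj_on_def ccw_dist_def)

lemma nn_integral_unif_circle_window_volume:
  fixes m :: nat
  assumes x: "0 < x" "x < 2 * pi"
  defines "D \<equiv> max 0 (2 * pi - real (Suc m) * x)"
  shows "(\<integral>\<^sup>+t. indicator {0..<2 * pi} t * ennreal (spaced_volume x m (t + x - 2 * pi) (t - x)) \<partial>unif_circle)
      = ennreal ((D ^ Suc m / Suc m + x * D ^ m) / (2 * pi) ^ Suc m)"
proof -
  define q :: real where "q = 1 / (2 * pi) ^ m"
  define S1 where "S1 = {0..2 * pi - x}"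
  define S2 where "S2 = {2 * pi - x<..<2 * pi}"
  have q: "0 \<le> q" "0 \<le> q * D ^ m" "0 \<le> D"
    by (auto simp: q_def D_def)
  have "indicator {0..<2 * pi} t * ennreal (spaced_volume x m (t + x - 2 * pi) (t - x))
      = indicator S1 t * ennreal (q * (max 0 (t - real m * x)) ^ m)
        + indicator S2 t * ennreal (q * D ^ m * (max 0 (t - (2 * pi - x))) ^ 0)" for t
  proof -
    consider "t \<in> S1" | "t \<in> S2" | "t \<notin> {0..<2 * pi}"
      using x by (force simp: S1_def S2_def)
    then show ?thesis
    proof cases
      case 1
      with x show ?thesis
        by (simp add: S1_def S2_def spaced_volume_def q_def algebra_simps)
    next
      case 2
      with x show ?thesis
        by (simp add: S1_def S2_def spaced_volume_def q_def D_def algebra_simps)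
    qed (use x in \<open>auto simp: S1_def S2_def\<close>)
  qed
  then have "(\<integral>\<^sup>+t. indicator {0..<2 * pi} t * ennreal (spaced_volume x m (t + x - 2 * pi) (t - x)) \<partial>unif_circle)
      = (\<integral>\<^sup>+t. indicator S1 t * ennreal (q * (max 0 (t - real m * x)) ^ m) \<partial>unif_circle)
        + (\<integral>\<^sup>+t. indicator S2 t * ennreal (q * D ^ m * (max 0 (t - (2 * pi - x))) ^ 0) \<partial>unif_circle)"
    by (simp add: S1_def S2_def nn_integral_add)
  also have "\<dots> = ennreal (q * D ^ Suc m / (Suc m * (2 * pi))) + ennreal (q * D ^ m * x / (2 * pi))"
    using x q nn_integral_unif_circle_ramp[of 0 "real m * x" "2 * pi - x" m q S1]
      nn_integral_unif_circle_ramp[of "2 * pi - x" "2 * pi - x" "2 * pi" 0 "q * D ^ m" S2]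
    by (simp add: S1_def S2_def D_def greaterThanLessThan_subseteq_atLeastAtMost_iff algebra_simps)
  also have "\<dots> = ennreal (q * D ^ Suc m / (Suc m * (2 * pi)) + q * D ^ m * x / (2 * pi))"
    using x q by (intro ennreal_plus[symmetric]) auto
  also have "q * D ^ Suc m / (Suc m * (2 * pi)) + q * D ^ m * x / (2 * pi)
      = (D ^ Suc m / Suc m + x * D ^ m) / (2 * pi) ^ Suc m"
    by (simp add: q_def field_simps del: of_nat_Suc)
  finally show ?thesis .
qed

lemma emeasure_wide_gaps_after_self_top:
  fixes A :: "'i set"
  assumes A: "finite A" "b \<notin> A" and x: "0 < x" "x < 2 * pi"
  defines "D \<equiv> max 0 (2 * pi - real (Suc (card A)) * x)"
  shows "emeasure (PiM (insert b A) (\<lambda>_. unif_circle))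
      {z \<in> wide_gaps_after x (insert b A) (insert b A). \<forall>i\<in>A. z i < z b}
      = ennreal ((D ^ Suc (card A) / Suc (card A) + x * D ^ card A) / (2 * pi) ^ Suc (card A))"
proof -
  interpret product_sigma_finite "\<lambda>_::'i. unif_circle"
    by (rule product_sigma_finite_unif_circle)
  let ?top = "{z \<in> wide_gaps_after x (insert b A) (insert b A). \<forall>i\<in>A. z i < z b}"
  have top_sets: "?top \<in> sets (PiM (insert b A) (\<lambda>_. unif_circle))"
    using sets_PiM_unif_circle_top[of "insert b A" b "wide_gaps_after x (insert b A) (insert b A)"] A
    by simp
  have slice: "{y \<in> space (PiM A (\<lambda>_. unif_circle)). y(b := t) \<in> ?top}
      = (if t \<in> {0..<2 * pi} then spaced_points x A (t + x - 2 * pi) (t - x) else {})" for t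
    using wide_gaps_after_top_section[OF A(2) _ x(1), of _ t]
    by (intro PiM_section_eq_if) (auto simp: spaced_points_def)
  have "emeasure (PiM (insert b A) (\<lambda>_. unif_circle)) ?top
      = (\<integral>\<^sup>+t. emeasure (PiM A (\<lambda>_. unif_circle)) {y \<in> space (PiM A (\<lambda>_. unif_circle)). y(b := t) \<in> ?top} \<partial>unif_circle)"
    using A top_sets by (rule emeasure_PiM_insert_sections_rev)
  also have "\<dots> = (\<integral>\<^sup>+t. indicator {0..<2 * pi} t * ennreal (spaced_volume x (card A) (t + x - 2 * pi) (t - x)) \<partial>unif_circle)"
    unfolding slice by (intro nn_integral_cong) (simp add: emeasure_spaced_points A x)
  also have "\<dots> = ennreal ((D ^ Suc (card A) / Suc (card A) + x * D ^ card A) / (2 * pi) ^ Suc (card A))"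
    unfolding D_def using x by (rule nn_integral_unif_circle_window_volume)
  finally show ?thesis .
qed

lemma window_volume_sum_eq:
  fixes m :: nat
  assumes x: "0 < x" "x < 2 * pi"
  defines "D \<equiv> max 0 (2 * pi - real (Suc m) * x)"
  shows "real (Suc m) * ((D ^ Suc m / Suc m + x * D ^ m) / (2 * pi) ^ Suc m)
      = (max 0 (1 - real (Suc m) * x / (2 * pi))) ^ m"
proof (cases "real (Suc m) * x \<le> 2 * pi")
  case True
  have "real (Suc m) * ((D ^ Suc m / Suc m + x * D ^ m) / (2 * pi) ^ Suc m)
      = D ^ m * (D + real (Suc m) * x) / (2 * pi) ^ Suc m"
    by (simp add: field_simps del: of_nat_Suc)
  also have "D + real (Suc m) * x = 2 * pi"
    using True by (simp add: D_def)
  also have "D ^ m * (2 * pi) / (2 * pi) ^ Suc m = (D / (2 * pi)) ^ m"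
    by (simp add: power_divide)
  also have "D / (2 * pi) = max 0 (1 - real (Suc m) * x / (2 * pi))"
    using True by (simp add: D_def field_simps)
  finally show ?thesis .
next
  case False
  moreover from this x have "m \<noteq> 0"
    by (cases m) auto
  ultimately show ?thesis
    by (simp add: D_def field_simps zero_power)
qed

lemma emeasure_wide_gaps_after_self:
  fixes I :: "'i set"
  assumes I: "finite I" "I \<noteq> {}" and x: "0 < x" "x < 2 * pi"
  shows "emeasure (PiM I (\<lambda>_. unif_circle)) (wide_gaps_after x I I)
      = ennreal ((max 0 (1 - real (card I) * x / (2 * pi))) ^ (card I - 1))"
proof -
  obtain m where m: "card I = Suc m"
    using I by (cases "card I") auto
  define D where "D = max 0 (2 * pi - real (Suc m) * x)"
  define V where "V = (D ^ Suc m / Suc m + x * D ^ m) / (2 * pi) ^ Suc m"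
  have top: "emeasure (PiM I (\<lambda>_. unif_circle)) {y \<in> wide_gaps_after x I I. \<forall>i\<in>I - {b}. y i < y b} = ennreal V"
    if "b \<in> I" for b
    using emeasure_wide_gaps_after_self_top[of "I - {b}" b x] I x that m
    by (simp add: insert_absorb D_def V_def)
  have "emeasure (PiM I (\<lambda>_. unif_circle)) (wide_gaps_after x I I)
      = (\<Sum>b\<in>I. emeasure (PiM I (\<lambda>_. unif_circle)) {y \<in> wide_gaps_after x I I. \<forall>i\<in>I - {b}. y i < y b})"
    using I x by (intro emeasure_eq_sum_argmax inj_on_wide_gaps_after_self sets_PiM_unif_circle_top) auto
  also have "\<dots> = of_nat (Suc m) * ennreal V"
    using m by (simp add: top)
  also have "\<dots> = ennreal (real (Suc m) * V)"
    by (subst ennreal_mult') (auto simp: ennreal_of_nat_eq_real_of_nat)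
  also have "real (Suc m) * V = (max 0 (1 - real (Suc m) * x / (2 * pi))) ^ m"
    unfolding V_def D_def using x by (rule window_volume_sum_eq)
  finally show ?thesis
    using m by simp
qed

lemma emeasure_ccw_arc:
  assumes "u \<in> {0..<2 * pi}" "0 < x" "x < 2 * pi"
  shows "emeasure lborel {t \<in> {0..<2 * pi}. ccw_dist u t \<le> x} = ennreal x"
proof (cases "u + x < 2 * pi")
  case True
  then have "{t \<in> {0..<2 * pi}. ccw_dist u t \<le> x} = {u..u + x}"
    using assms by (auto simp: ccw_dist_def)
  then show ?thesis
    using assms by simp
next
  case False
  then have "{t \<in> {0..<2 * pi}. ccw_dist u t \<le> x} = {u..<2 * pi} \<union> {0..u + x - 2 * pi}"
    using assms by (auto simp: ccw_dist_def)
  moreover have "emeasure lborel ({u..<2 * pi} \<union> {0..u + x - 2 * pi})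
      = emeasure lborel {u..<2 * pi} + emeasure lborel {0..u + x - 2 * pi}"
    using assms by (intro plus_emeasure[symmetric]) auto
  moreover have "ennreal (2 * pi - u) + ennreal (u + x - 2 * pi) = ennreal x"
    using assms False by (subst ennreal_plus[symmetric]) auto
  ultimately show ?thesis
    using assms False by simp
qed

lemma emeasure_lborel_ccw_arcs:
  fixes I :: "'i set" and y :: "'i \<Rightarrow> real"
  assumes I: "finite I" and rng: "\<And>i. i \<in> I \<Longrightarrow> y i \<in> {0..<2 * pi}"
    and gap: "\<And>i j. i \<in> I \<Longrightarrow> j \<in> I \<Longrightarrow> i \<noteq> j \<Longrightarrow> x < ccw_dist (y i) (y j)"
    and x: "0 < x" "x < 2 * pi"
  shows "emeasure lborel (\<Union>i\<in>I. {t \<in> {0..<2 * pi}. ccw_dist (y i) t \<le> x}) = ennreal (real (card I) * x)"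
proof -
  define arc where "arc i = {t \<in> {0..<2 * pi}. ccw_dist (y i) t \<le> x}" for i
  have arc_sets: "arc i \<in> sets borel" for i
    unfolding arc_def by measurable
  have disj: "disjoint_family_on arc I"
    unfolding disjoint_family_on_def
  proof (intro ballI impI)
    fix i j assume ij: "i \<in> I" "j \<in> I" "i \<noteq> j"
    have False if "t \<in> arc i" "t \<in> arc j" for t
      using that gap[OF ij] gap[of j i] ij rng[of i] rng[of j]
      by (auto simp: arc_def ccw_dist_def split: if_splits)
    then show "arc i \<inter> arc j = {}"
      by blast
  qed
  have "emeasure lborel (\<Union>i\<in>I. arc i) = (\<Sum>i\<in>I. emeasure lborel (arc i))"
    using I disj arc_sets by (intro sum_emeasure[symmetric]) auto
  also have "\<dots> = (\<Sum>i\<in>I. ennreal x)"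
    unfolding arc_def using rng x by (intro sum.cong refl emeasure_ccw_arc) auto
  also have "\<dots> = ennreal (real (card I) * x)"
    using x by (simp add: ennreal_of_nat_eq_real_of_nat ennreal_mult)
  finally show ?thesis
    by (simp add: arc_def)
qed

lemma emeasure_unif_circle_beyond_arcs:
  fixes I :: "'i set" and y :: "'i \<Rightarrow> real"
  assumes I: "finite I" and rng: "\<And>i. i \<in> I \<Longrightarrow> y i \<in> {0..<2 * pi}"
    and gap: "\<And>i j. i \<in> I \<Longrightarrow> j \<in> I \<Longrightarrow> i \<noteq> j \<Longrightarrow> x < ccw_dist (y i) (y j)"
    and x: "0 < x" "x < 2 * pi"
  shows "emeasure unif_circle {t \<in> {0..<2 * pi}. \<forall>i\<in>I. x < ccw_dist (y i) t}
     = ennreal (1 - real (card I) * x / (2 * pi))"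
proof -
  define arcs where "arcs = (\<Union>i\<in>I. {t \<in> {0..<2 * pi}. ccw_dist (y i) t \<le> x})"
  have "{t \<in> {0..<2 * pi}. ccw_dist (y i) t \<le> x} \<in> sets borel" for i
    by measurable
  then have arcs_sets: "arcs \<in> sets borel"
    unfolding arcs_def using I by (intro sets.finite_UN) auto
  have sub: "arcs \<subseteq> {0..<2 * pi}"
    by (auto simp: arcs_def)
  have measure_arcs: "emeasure lborel arcs = ennreal (real (card I) * x)"
    unfolding arcs_def using assms by (rule emeasure_lborel_ccw_arcs)
  then have "real (card I) * x \<le> 2 * pi"
    using emeasure_mono[OF sub, of lborel] by simp
  have "{t \<in> {0..<2 * pi}. \<forall>i\<in>I. x < ccw_dist (y i) t} = {0..<2 * pi} - arcs"
    by (auto simp: arcs_def not_le)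
  moreover have "emeasure unif_circle ({0..<2 * pi} - arcs) = emeasure lborel ({0..<2 * pi} - arcs) / ennreal (2 * pi)"
    using arcs_sets by (subst emeasure_unif_circle) (auto intro!: arg_cong2[where f="(/)"] arg_cong[where f="emeasure lborel"])
  moreover have "emeasure lborel ({0..<2 * pi} - arcs) = ennreal (2 * pi - real (card I) * x)"
    using sub measure_arcs arcs_sets x by (subst emeasure_Diff) (auto simp: ennreal_minus)
  moreover have "ennreal (2 * pi - real (card I) * x) / ennreal (2 * pi) = ennreal (1 - real (card I) * x / (2 * pi))"
    using \<open>real (card I) * x \<le> 2 * pi\<close> by (simp add: divide_ennreal diff_divide_distrib)
  ultimately show ?thesis
    by simp
qed

lemma wide_gaps_after_insert_section:
  assumes b: "b \<notin> K" and "I \<subseteq> K" and y: "y \<in> space (PiM K (\<lambda>_. unif_circle))"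
  shows "y(b := t) \<in> wide_gaps_after x I (insert b K)
     \<longleftrightarrow> y \<in> wide_gaps_after x I K \<and> t \<in> {0..<2 * pi} \<and> (\<forall>i\<in>I. x < ccw_dist (y i) t)"
proof -
  let ?z = "y(b := t)"
  have z: "?z \<in> space (PiM (insert b K) (\<lambda>_. unif_circle))"
    using y by (rule fun_upd_in_space_PiM) simp
  have zi: "?z i = y i" if "i \<in> K" for i
    using that b by auto
  have "b \<notin> I"
    using assms by auto
  then show ?thesis
    using z y zi \<open>I \<subseteq> K\<close> unfolding wide_gaps_after_def
    by (fastforce simp: subset_iff)
qed

lemma emeasure_wide_gaps_after_insert:
  fixes K :: "'i set"
  assumes K: "finite K" "b \<notin> K" "I \<subseteq> K" and x: "0 < x" "x < 2 * pi"
  shows "emeasure (PiM (insert b K) (\<lambda>_. unif_circle)) (wide_gaps_after x I (insert b K))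
      = ennreal (1 - real (card I) * x / (2 * pi)) * emeasure (PiM K (\<lambda>_. unif_circle)) (wide_gaps_after x I K)"
proof -
  interpret product_sigma_finite "\<lambda>_::'i. unif_circle"
    by (rule product_sigma_finite_unif_circle)
  define r where "r = 1 - real (card I) * x / (2 * pi)"
  define beyond where "beyond y = {t \<in> {0..<2 * pi}. \<forall>i\<in>I. x < ccw_dist (y i) t}" for y :: "'i \<Rightarrow> real"
  have I: "finite I"
    using K finite_subset by blast
  have beyond: "emeasure unif_circle (beyond y) = ennreal r" if "y \<in> wide_gaps_after x I K" for y
    unfolding beyond_def r_def
    using that K(3) by (intro emeasure_unif_circle_beyond_arcs[OF I _ _ x]) (auto simp: wide_gaps_after_def)
  have "emeasure (PiM (insert b K) (\<lambda>_. unif_circle)) (wide_gaps_after x I (insert b K))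
      = (\<integral>\<^sup>+y. emeasure unif_circle {t \<in> space unif_circle. y(b := t) \<in> wide_gaps_after x I (insert b K)}
          \<partial>PiM K (\<lambda>_. unif_circle))"
    using K by (intro emeasure_PiM_insert_sections wide_gaps_after_sets) auto
  also have "\<dots> = (\<integral>\<^sup>+y. ennreal r * indicator (wide_gaps_after x I K) y \<partial>PiM K (\<lambda>_. unif_circle))"
  proof (intro nn_integral_cong)
    fix y assume y: "y \<in> space (PiM K (\<lambda>_. unif_circle))"
    then have "{t \<in> space unif_circle. y(b := t) \<in> wide_gaps_after x I (insert b K)}
        = (if y \<in> wide_gaps_after x I K then beyond y else {})"
      using wide_gaps_after_insert_section[OF K(2,3) y] by (auto simp: beyond_def)
    then show "emeasure unif_circle {t \<in> space unif_circle. y(b := t) \<in> wide_gaps_after x I (insert b K)}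
        = ennreal r * indicator (wide_gaps_after x I K) y"
      by (simp add: beyond)
  qed
  also have "\<dots> = ennreal r * emeasure (PiM K (\<lambda>_. unif_circle)) (wide_gaps_after x I K)"
    using K by (simp add: nn_integral_cmult_indicator)
  finally show ?thesis
    by (simp add: r_def)
qed

lemma emeasure_wide_gaps_after:
  fixes I J :: "'i set"
  assumes I: "finite I" and J: "finite J" "I \<inter> J = {}" and x: "0 < x" "x < 2 * pi"
  shows "emeasure (PiM (I \<union> J) (\<lambda>_. unif_circle)) (wide_gaps_after x I (I \<union> J))
      = ennreal ((max 0 (1 - real (card I) * x / (2 * pi))) ^ (card (I \<union> J) - 1))"
  using J
proof (induction J rule: finite_induct)
  case empty
  show ?case
  proof (cases "I = {}")
    case True
    then show ?thesis
      by (simp add: wide_gaps_after_def space_PiM_empty)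
  next
    case False
    with emeasure_wide_gaps_after_self[OF I False x] show ?thesis
      by simp
  qed
next
  case (insert b J)
  define r where "r = 1 - real (card I) * x / (2 * pi)"
  have K: "b \<notin> I \<union> J" "finite (I \<union> J)" "I \<subseteq> I \<union> J"
    using insert I by auto
  have "ennreal r * ennreal ((max 0 r) ^ (card (I \<union> J) - 1)) = ennreal ((max 0 r) ^ card (I \<union> J))"
  proof (cases "I \<union> J = {}")
    case True
    then show ?thesis
      by (simp add: r_def)
  next
    case False
    with K(2) have "max 0 r * (max 0 r) ^ (card (I \<union> J) - 1) = (max 0 r) ^ card (I \<union> J)"
      by (metis card_gt_0_iff power_Suc Suc_diff_1)
    with False K(2) show ?thesis
      by (cases "0 \<le> r") (auto simp: ennreal_mult[symmetric] ennreal_neg)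
  qed
  with emeasure_wide_gaps_after_insert[OF K(2,1,3) x] insert K show ?case
    by (simp add: r_def)
qed

lemma measure_wide_gaps_after:
  assumes "finite K" "I \<subseteq> K" "0 < x" "x < 2 * pi"
  shows "measure (PiM K (\<lambda>_. unif_circle)) (wide_gaps_after x I K)
      = (max 0 (1 - real (card I) * x / (2 * pi))) ^ (card K - 1)"
proof -
  have "I \<union> (K - I) = K"
    using assms(2) by auto
  then show ?thesis
    using emeasure_wide_gaps_after[of I "K - I" x] assms finite_subset[OF assms(2,1)]
    by (simp add: measure_def)
qed

section \<open>Distribution of the second largest gap\<close>

lemma emeasure_unif_circle_singleton [simp]: "emeasure unif_circle {p} = 0"
proof -
  have "emeasure lborel ({0..<2 * pi} \<inter> {p}) \<le> emeasure lborel {p}"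
    by (intro emeasure_mono) auto
  then show ?thesis
    by (simp add: emeasure_unif_circle)
qed

lemma AE_PiM_unif_circle_in_range:
  assumes "k \<in> K"
  shows "AE y in PiM K (\<lambda>_. unif_circle). y k \<in> {0..<2 * pi}"
proof (rule AE_PiM_component[OF prob_space_unif_circle assms])
  show "AE t in unif_circle. t \<in> {0..<2 * pi}"
    unfolding unif_circle_def by (intro AE_uniform_measureI) auto
qed

lemma AE_PiM_unif_circle_diff_neq:
  fixes K :: "'i set"
  assumes K: "finite K" "i \<in> K" "j \<in> K" "i \<noteq> j"
  shows "AE y in PiM K (\<lambda>_. unif_circle). y j - y i \<noteq> c"
proof -
  interpret product_sigma_finite "\<lambda>_::'i. unif_circle"
    by (rule product_sigma_finite_unif_circle)
  define N where "N = {y \<in> space (PiM K (\<lambda>_. unif_circle)). y j - y i = c}"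
  have N_sets: "N \<in> sets (PiM K (\<lambda>_. unif_circle))"
    unfolding N_def using K by measurable
  have K_eq: "insert j (K - {j}) = K"
    using K by auto
  have "emeasure (PiM K (\<lambda>_. unif_circle)) N
      = (\<integral>\<^sup>+y. emeasure unif_circle {t \<in> space unif_circle. y(j := t) \<in> N} \<partial>PiM (K - {j}) (\<lambda>_. unif_circle))"
    using emeasure_PiM_insert_sections[of "K - {j}" j N, unfolded K_eq] K N_sets by simp
  also have "\<dots> = (\<integral>\<^sup>+y. emeasure unif_circle {y i + c} \<partial>PiM (K - {j}) (\<lambda>_. unif_circle))"
  proof (intro nn_integral_cong arg_cong[where f="emeasure unif_circle"])
    fix y assume "y \<in> space (PiM (K - {j}) (\<lambda>_. unif_circle))"
    then have "y(j := t) \<in> space (PiM K (\<lambda>_. unif_circle))" for t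
      using fun_upd_in_space_PiM[of y "K - {j}" "\<lambda>_. unif_circle" t j, unfolded K_eq] by simp
    then show "{t \<in> space unif_circle. y(j := t) \<in> N} = {y i + c}"
      using K by (auto simp: N_def)
  qed
  finally have "N \<in> null_sets (PiM K (\<lambda>_. unif_circle))"
    using N_sets by (simp add: null_sets_def)
  then show ?thesis
    by (rule AE_I') (auto simp: N_def)
qed

lemma AE_angles_in_range_distinct:
  fixes L :: nat
  shows "AE th in PiM {0..<L} (\<lambda>_. unif_circle). (\<forall>k<L. th k \<in> {0..<2 * pi}) \<and> inj_on th {..<L}"
proof -
  have "AE th in PiM {0..<L} (\<lambda>_. unif_circle). \<forall>k\<in>{..<L}. th k \<in> {0..<2 * pi}"
  proof (rule AE_finite_allI)
    fix k assume "k \<in> {..<L}"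
    then show "AE th in PiM {0..<L} (\<lambda>_. unif_circle). th k \<in> {0..<2 * pi}"
      by (intro AE_PiM_unif_circle_in_range) simp
  qed simp
  moreover have "AE th in PiM {0..<L} (\<lambda>_. unif_circle). \<forall>ij\<in>{..<L} \<times> {..<L}. fst ij \<noteq> snd ij \<longrightarrow> th (snd ij) \<noteq> th (fst ij)"
  proof (rule AE_finite_allI)
    fix ij assume ij: "ij \<in> {..<L} \<times> {..<L}"
    show "AE th in PiM {0..<L} (\<lambda>_. unif_circle). fst ij \<noteq> snd ij \<longrightarrow> th (snd ij) \<noteq> th (fst ij)"
    proof (cases "fst ij = snd ij")
      case False
      with ij have "AE th in PiM {0..<L} (\<lambda>_. unif_circle). th (snd ij) - th (fst ij) \<noteq> 0"
        by (intro AE_PiM_unif_circle_diff_neq) auto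
      then show ?thesis
        by eventually_elim simp
    qed simp
  qed simp
  ultimately show ?thesis
    by eventually_elim (force simp: inj_on_def)
qed

lemma AE_second_largest_angle_neq:
  assumes "L \<ge> 2" "0 < p" "p < 2 * pi"
  shows "AE th in PiM {0..<L} (\<lambda>_. unif_circle). second_largest_angle L th \<noteq> p"
proof -
  have "AE th in PiM {0..<L} (\<lambda>_. unif_circle). \<forall>ij\<in>{..<L} \<times> {..<L}. fst ij \<noteq> snd ij \<longrightarrow>
      th (snd ij) - th (fst ij) \<noteq> p \<and> th (snd ij) - th (fst ij) \<noteq> 2 * pi - p"
    by (intro AE_finite_allI) (auto intro: AE_PiM_unif_circle_diff_neq)
  then show ?thesis
  proof eventually_elim
    case (elim th)
    obtain i j where "i < L" "j < L"
      "second_largest_angle L th = th j - th i \<or> second_largest_angle L th = 2 * pi - (th j - th i)"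
      using second_largest_angle_is_diff[OF assms(1)] by blast
    with elim assms(2,3) show ?case
      by (cases "i = j") force+
  qed
qed

definition incl_excl_coeff :: "nat \<Rightarrow> real" where
  "incl_excl_coeff n = (-1) powi (int n - 1) * (real n - 1)"

lemma sum_binomial_incl_excl_coeff:
  "(\<Sum>n\<le>m. real (m choose n) * incl_excl_coeff n) = (if m \<le> 1 then 1 else 0)"
proof -
  have coeff: "incl_excl_coeff n = (-1) ^ n * (1 - real n)" for n
    by (cases n) (simp_all add: incl_excl_coeff_def algebra_simps)
  show ?thesis
  proof (cases "m \<le> 1")
    case True
    then have "m = 0 \<or> m = 1"
      by auto
    then show ?thesis
      by (auto simp: coeff)
  next
    case False
    have "(\<Sum>n\<le>m. real (m choose n) * incl_excl_coeff n)
        = (\<Sum>n\<le>m. (-1) ^ n * of_nat (m choose n)) - (\<Sum>n\<le>m. (-1) ^ n * of_nat n * of_nat (m choose n))"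
      by (simp add: coeff sum_subtractf[symmetric] algebra_simps)
    with False show ?thesis
      using choose_alternating_sum[of m, where 'a=real] choose_alternating_linear_sum[of m, where 'a=real]
      by simp
  qed
qed

lemma sum_Pow_incl_excl_coeff:
  "finite S \<Longrightarrow> (\<Sum>I\<in>Pow S. incl_excl_coeff (card I)) = (if card S \<le> 1 then 1 else 0)"
  by (simp add: sum_Pow_card sum_binomial_incl_excl_coeff)

lemma cdf_sum_eq_sum_binomial:
  assumes "L \<ge> 2" "0 < x"
  shows "cdf_sum L x = (\<Sum>n\<le>L. real (L choose n) * incl_excl_coeff n * (max 0 (1 - real n * x / (2 * pi))) ^ (L - 1))"
proof -
  define N where "N = min L (nat \<lfloor>2 * pi / x\<rfloor>)"
  have "n \<le> nat \<lfloor>2 * pi / x\<rfloor> \<longleftrightarrow> real n * x \<le> 2 * pi" for n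
  proof -
    have "n \<le> nat \<lfloor>2 * pi / x\<rfloor> \<longleftrightarrow> int n \<le> \<lfloor>2 * pi / x\<rfloor>"
      using assms by (intro le_nat_iff) simp
    also have "\<dots> \<longleftrightarrow> real n \<le> 2 * pi / x"
      by (simp add: le_floor_iff)
    finally show ?thesis
      using assms by (simp add: pos_le_divide_eq)
  qed
  then have in_range: "n \<le> N \<longleftrightarrow> n \<le> L \<and> real n * x \<le> 2 * pi" for n
    by (auto simp: N_def)
  have "cdf_sum L x = (\<Sum>n=0..N. real (L choose n) * incl_excl_coeff n * (max 0 (1 - real n * x / (2 * pi))) ^ (L - 1))"
    unfolding cdf_sum_def N_def[symmetric] using in_range
    by (intro sum.cong refl) (auto simp: incl_excl_coeff_def field_simps)
  also have "\<dots> = (\<Sum>n\<le>L. real (L choose n) * incl_excl_coeff n * (max 0 (1 - real n * x / (2 * pi))) ^ (L - 1))"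
  proof (rule sum.mono_neutral_left)
    show "\<forall>n\<in>{..L} - {0..N}. real (L choose n) * incl_excl_coeff n * (max 0 (1 - real n * x / (2 * pi))) ^ (L - 1) = 0"
      using in_range assms by (auto simp: field_simps not_le zero_power)
  qed (use in_range in auto)
  finally show ?thesis .
qed

lemma second_largest_angle_le_incl_excl:
  assumes L: "L \<ge> 2" and rng: "\<And>k. k < L \<Longrightarrow> th k \<in> {0..<2 * pi}" and inj: "inj_on th {..<L}"
    and th: "th \<in> space (PiM {0..<L} (\<lambda>_. unif_circle))"
  shows "(if second_largest_angle L th \<le> x then 1 else 0)
      = (\<Sum>I\<in>Pow {0..<L}. incl_excl_coeff (card I) * indicator (wide_gaps_after x I {0..<L}) th)"
proof -
  define S where "S = wide_gap_starts x L th"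
  have S: "S \<subseteq> {0..<L}" "finite S"
    by (auto simp: S_def wide_gap_starts_def)
  have "th \<in> wide_gaps_after x I {0..<L} \<longleftrightarrow> I \<subseteq> S" if "I \<subseteq> {0..<L}" for I
    using that rng th by (auto simp: wide_gaps_after_def S_def wide_gap_starts_def)
  then have "(\<Sum>I\<in>Pow {0..<L}. incl_excl_coeff (card I) * indicator (wide_gaps_after x I {0..<L}) th)
      = (\<Sum>I\<in>Pow {0..<L}. if I \<in> Pow S then incl_excl_coeff (card I) else 0)"
    by (intro sum.cong refl) auto
  also have "\<dots> = (\<Sum>I\<in>Pow S. incl_excl_coeff (card I))"
  proof -
    have "Pow {0..<L} \<inter> {I. I \<subseteq> S} = Pow S"
      using S by auto
    then show ?thesis
      by (simp add: sum.If_cases)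
  qed
  also have "\<dots> = (if second_largest_angle L th \<le> x then 1 else 0)"
    using S second_largest_angle_le_iff[OF L rng inj] by (simp add: sum_Pow_incl_excl_coeff S_def)
  finally show ?thesis ..
qed

lemma measure_second_largest_angle_le:
  assumes L: "L \<ge> 2" and x: "0 < x" "x < 2 * pi"
  shows "measure (PiM {0..<L} (\<lambda>_. unif_circle)) {th \<in> space (PiM {0..<L} (\<lambda>_. unif_circle)).
      second_largest_angle L th \<le> x} = cdf_sum L x"
proof -
  define P where "P = PiM {0..<L} (\<lambda>_::nat. unif_circle)"
  define c where "c I = incl_excl_coeff (card I)" for I :: "nat set"
  interpret P: prob_space P
    unfolding P_def by (intro prob_space_PiM prob_space_unif_circle)
  have sets: "wide_gaps_after x I {0..<L} \<in> sets P" if "I \<in> Pow {0..<L}" for I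
    using that by (auto simp: P_def)
  have [measurable]: "(\<lambda>th. second_largest_angle L th) \<in> borel_measurable P"
    using L by (intro second_largest_angle_measurable) (auto simp: P_def)
  have "AE th in P. indicator {th \<in> space P. second_largest_angle L th \<le> x} th
      = (\<Sum>I\<in>Pow {0..<L}. c I * indicator (wide_gaps_after x I {0..<L}) th)"
    using AE_angles_in_range_distinct[of L] AE_space unfolding P_def[symmetric]
  proof eventually_elim
    case (elim th)
    then show ?case
      using second_largest_angle_le_incl_excl[OF L, of th x]
      by (auto simp: c_def P_def indicator_def split: if_splits)
  qed
  moreover have "(\<lambda>th. \<Sum>I\<in>Pow {0..<L}. c I * indicator (wide_gaps_after x I {0..<L}) th) \<in> borel_measurable P"
    using sets by (intro borel_measurable_sum borel_measurable_times borel_measurable_const borel_measurable_indicator)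
  ultimately have "measure P {th \<in> space P. second_largest_angle L th \<le> x}
      = (\<integral>th. (\<Sum>I\<in>Pow {0..<L}. c I * indicator (wide_gaps_after x I {0..<L}) th) \<partial>P)"
    by (subst integral_cong_AE[symmetric]) (auto simp: Int_absorb2)
  also have "\<dots> = (\<Sum>I\<in>Pow {0..<L}. c I * measure P (wide_gaps_after x I {0..<L}))"
    using sets sets.sets_into_space
    by (subst Bochner_Integration.integral_sum) (auto simp: P.emeasure_eq_measure Int_absorb2)
  also have "\<dots> = (\<Sum>I\<in>Pow {0..<L}. c I * (max 0 (1 - real (card I) * x / (2 * pi))) ^ (L - 1))"
    using x by (intro sum.cong refl) (simp add: P_def measure_wide_gaps_after)
  also have "\<dots> = cdf_sum L x"
    using sum_Pow_card[of "{0..<L}" "\<lambda>n. incl_excl_coeff n * (max 0 (1 - real n * x / (2 * pi))) ^ (L - 1)"]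
      L x by (simp add: c_def cdf_sum_eq_sum_binomial mult.assoc)
  finally show ?thesis
    by (simp add: P_def)
qed

section \<open>The random variable S\<close>

lemma S_val_ge:
  assumes "0 < a"
  shows "ereal a \<le> S_val a L th"
proof -
  have "a \<le> a / t" if "0 < t" "t \<le> 1" for t
    using assms that by (simp add: le_divide_eq)
  then show ?thesis
    by (simp add: S_val_def Let_def)
qed

lemma S_val_le_iff:
  assumes "0 < a" "a \<le> s"
  shows "S_val a L th \<le> ereal s \<longleftrightarrow> a / s \<le> sin (second_largest_angle L th)"
proof -
  have "0 < s" "0 < a / s"
    using assms by simp_all
  show ?thesis
  proof (cases "0 < sin (second_largest_angle L th)")
    case True
    with \<open>0 < s\<close> show ?thesis
      by (simp add: S_val_def field_simps)
  next
    case False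
    with \<open>0 < a / s\<close> show ?thesis
      by (simp add: S_val_def)
  qed
qed

lemma sets_S_val_le:
  assumes "L \<ge> 2" "0 < a" "a \<le> s"
  shows "{th \<in> space (PiM {0..<L} (\<lambda>_. unif_circle)). S_val a L th \<le> ereal s}
      \<in> sets (PiM {0..<L} (\<lambda>_. unif_circle))"
proof -
  have [measurable]: "(\<lambda>th. second_largest_angle L th) \<in> borel_measurable (PiM {0..<L} (\<lambda>_. unif_circle))"
    using assms(1) by (intro second_largest_angle_measurable) auto
  have "{th \<in> space (PiM {0..<L} (\<lambda>_. unif_circle)). S_val a L th \<le> ereal s}
      = {th \<in> space (PiM {0..<L} (\<lambda>_. unif_circle)). a / s \<le> sin (second_largest_angle L th)}"
    using S_val_le_iff[OF assms(2,3)] by auto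
  also have "\<dots> \<in> sets (PiM {0..<L} (\<lambda>_. unif_circle))"
    by measurable
  finally show ?thesis .
qed

lemma measure_S_val_le:
  assumes L: "L \<ge> 2" and a: "0 < a" "a \<le> s"
  defines "P \<equiv> PiM {0..<L} (\<lambda>_. unif_circle)"
  shows "measure P {th \<in> space P. S_val a L th \<le> ereal s}
     = cdf_sum L (pi - arcsin (a / s)) - cdf_sum L (arcsin (a / s))"
proof -
  interpret P: prob_space P
    unfolding P_def by (intro prob_space_PiM prob_space_unif_circle)
  define p where "p = arcsin (a / s)"
  have q: "0 < a / s" "a / s \<le> 1"
    using a by auto
  have p: "0 < p" "p \<le> pi / 2" "p < 2 * pi"
    unfolding p_def using arcsin_less_arcsin[of 0 "a / s"] arcsin_bounded[of "a / s"] q by auto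
  have [measurable]: "(\<lambda>th. second_largest_angle L th) \<in> borel_measurable P"
    using L by (intro second_largest_angle_measurable) (auto simp: P_def)
  define at_most where "at_most y = {th \<in> space P. second_largest_angle L th \<le> y}" for y
  define below where "below = {th \<in> space P. second_largest_angle L th < p}"
  have sets: "at_most y \<in> sets P" "below \<in> sets P" for y
    unfolding at_most_def below_def by measurable
  have "AE th in P. th \<in> {th \<in> space P. S_val a L th \<le> ereal s} \<longleftrightarrow> th \<in> at_most (pi - p) - below"
    using AE_angles_in_range_distinct[of L] unfolding P_def[symmetric]
  proof eventually_elim
    case (elim th)
    then show ?case
      using second_largest_angle_bounds[OF L, of th] q
      by (auto simp: S_val_le_iff[OF a] le_sin_iff_arcsin_bounds at_most_def below_def p_def)
  qed
  then have "measure P {th \<in> space P. S_val a L th \<le> ereal s} = measure P (at_most (pi - p) - below)"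
    using sets sets_S_val_le[OF L a] by (intro measure_eq_AE) (auto simp: P_def)
  also have "\<dots> = measure P (at_most (pi - p)) - measure P below"
    using sets p by (intro P.finite_measure_Diff) (auto simp: at_most_def below_def)
  also have "measure P below = measure P (at_most p)"
  proof (rule measure_eq_AE)
    show "AE th in P. th \<in> below \<longleftrightarrow> th \<in> at_most p"
      using AE_second_largest_angle_neq[OF L p(1,3)] unfolding P_def[symmetric]
      by eventually_elim (auto simp: at_most_def below_def)
  qed (use sets in auto)
  also have "measure P (at_most (pi - p)) - measure P (at_most p) = cdf_sum L (pi - p) - cdf_sum L p"
    using p L by (simp add: at_most_def P_def measure_second_largest_angle_le)
  finally show ?thesis
    by (simp add: p_def)
qed

lemma S_val_restrict: "S_val a L (restrict th {0..<L}) = S_val a L th"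
proof -
  have "sorted_angles L (restrict th {0..<L}) = sorted_angles L th"
    unfolding sorted_angles_def by (intro arg_cong[where f=sort] map_cong) auto
  then show ?thesis
    by (simp add: S_val_def second_largest_angle_def internodal_angles_def)
qed

lemma (in prob_space) prob_indep_unif_circle:
  assumes "I \<noteq> {}" and indep: "indep_vars (\<lambda>_. borel) X I"
    and unif: "\<And>i. i \<in> I \<Longrightarrow> distr M borel (X i) = uniform_measure lborel {0..<2 * pi}"
    and Q: "{th \<in> space (PiM I (\<lambda>_. unif_circle)). Q th} \<in> sets (PiM I (\<lambda>_. unif_circle))"
  shows "prob {\<omega> \<in> space M. Q (\<lambda>i\<in>I. X i \<omega>)}
      = measure (PiM I (\<lambda>_. unif_circle)) {th \<in> space (PiM I (\<lambda>_. unif_circle)). Q th}"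
proof -
  let ?P = "PiM I (\<lambda>_. unif_circle)" and ?Y = "\<lambda>\<omega>. \<lambda>i\<in>I. X i \<omega>"
  have rv: "random_variable borel (X i)" if "i \<in> I" for i
    using indep that by (auto simp: indep_vars_def)
  moreover have "measurable M unif_circle = measurable M borel"
    by (rule measurable_cong_sets) simp_all
  ultimately have Y: "?Y \<in> measurable M ?P"
    by (intro measurable_restrict) auto
  have "distr M ?P ?Y = distr M (PiM I (\<lambda>_. borel)) ?Y"
    by (intro distr_cong sets_PiM_cong) simp_all
  also have "\<dots> = PiM I (\<lambda>i. distr M borel (X i))"
    using indep_vars_iff_distr_eq_PiM'[OF assms(1) rv] indep by simp
  also have "\<dots> = ?P"
    using unif by (intro PiM_cong) (auto simp: unif_circle_def)
  finally have distr: "distr M ?P ?Y = ?P" .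
  have "{\<omega> \<in> space M. Q (?Y \<omega>)} = ?Y -` {th \<in> space ?P. Q th} \<inter> space M"
    using measurable_space[OF Y] by auto
  also have "prob \<dots> = measure (distr M ?P ?Y) {th \<in> space ?P. Q th}"
    using Y Q by (rule measure_distr[symmetric])
  finally show ?thesis
    unfolding distr .
qed

theorem theorem1:
  fixes M :: "'w measure" and \<Theta> :: "nat \<Rightarrow> 'w \<Rightarrow> real"
    and L :: nat and \<sigma>r a :: real
  assumes "prob_space M"
    and "L \<ge> 2" and "\<sigma>r > 0"
    and "prob_space.indep_vars M (\<lambda>_. borel) \<Theta> {0..<L}"
    and "\<And>k. k < L \<Longrightarrow> distr M borel (\<Theta> k) = uniform_measure lborel {0..<2 * pi}"
    and "a = \<sigma>r * sqrt (4 / real L)"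
  shows "(AE \<omega> in M. ereal a \<le> S_val a L (\<lambda>k. \<Theta> k \<omega>))
    \<and> (\<forall>s \<ge> a. measure M {\<omega> \<in> space M. S_val a L (\<lambda>k. \<Theta> k \<omega>) \<le> ereal s}
          = cdf_sum L (pi - arcsin (a / s)) - cdf_sum L (arcsin (a / s)))"
proof -
  interpret prob_space M
    by fact
  have a: "0 < a"
    using assms(2,3,6) by simp
  have "measure M {\<omega> \<in> space M. S_val a L (\<lambda>k. \<Theta> k \<omega>) \<le> ereal s}
      = cdf_sum L (pi - arcsin (a / s)) - cdf_sum L (arcsin (a / s))" if s: "a \<le> s" for s
  proof -
    have "measure M {\<omega> \<in> space M. S_val a L (\<lambda>k\<in>{0..<L}. \<Theta> k \<omega>) \<le> ereal s}
        = measure (PiM {0..<L} (\<lambda>_. unif_circle)) {th \<in> space (PiM {0..<L} (\<lambda>_. unif_circle)). S_val a L th \<le> ereal s}"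
      using assms(2,4,5) sets_S_val_le[OF assms(2) a s] by (intro prob_indep_unif_circle) auto
    then show ?thesis
      using measure_S_val_le[OF assms(2) a s] by (simp add: S_val_restrict)
  qed
  then show ?thesis
    using S_val_ge[OF a] by simp
qed

end
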